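(* In the setting described in the context, the map $\xi:X_{\mathfrak L_1}\times\mathbb Z_+\to X_{\mathfrak L_2}\times\mathbb Z_+$, $\xi(x,n)=(\psi_0(x),\,g_{(\pi_1(x)_{[1,L]},\,v^L_L(x))}(n))$, is a homeomorphism (where $\mathbb Z_+$ carries the discrete topology).
   Context: $\mathbb Z_+=\{0,1,2,\dots\}$, $\mathbb N=\{1,2,\dots\}$. A $\lambda$-graph system $\mathfrak L=(V,E,\lambda,\iota)$ over a finite alphabet $\Sigma$ consists of finite nonempty pairwise disjoint vertex sets $V_l$ ($l\in\mathbb Z_+$); finite pairwise disjoint edge sets $E_{l,l+1}$, each $e\in E_{l,l+1}$ having a source $s(e)\in V_l$ and a terminal $t(e)\in V_{l+1}$; a labeling map $\lambda:E\to\Sigma$; and surjections $\iota:V_{l+1}\to V_l$; such that every vertex is the source of some edge, every vertex in $V_l$ ($l\ge1$) is the terminal of some edge, and (local property) for all $l\ge1$, $u\in V_{l-1}$, $v\in V_{l+1}$ there is a label-preserving bijection between $\{e\in E_{l,l+1}: \iota(s(e))=u,\ t(e)=v\}$ and $\{e\in E_{l-1,l}: s(e)=u,\ t(e)=\iota(v)\}$. Left-resolving: $t(e)=t(f)$, $\lambda(e)=\lambda(f)$ imply $e=f$. $\Omega_{\mathfrak L}=\{(u^l)_{l}\in\prod_l V_l: \iota(u^{l+1})=u^l\}$ (projective limit topology). $E_{\mathfrak L}$ = set of $(u,\alpha,w)\in\Omega_{\mathfrak L}\times\Sigma\times\Omega_{\mathfrak L}$ such that for each $l$ some $e\in E_{l,l+1}$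 has $s(e)=u^l$, $t(e)=w^{l+1}$, $\lambda(e)=\alpha$. $X_{\mathfrak L}$ = set of $x=(\alpha_i,u_i)_{i\in\mathbb N}$ in $\Sigma\times\Omega_{\mathfrak L}$ with $(u_i,\alpha_{i+1},u_{i+1})\in E_{\mathfrak L}$ for all $i$ and $(u_0,\alpha_1,u_1)\in E_{\mathfrak L}$ for some $u_0$; relative product topology; $\sigma_{\mathfrak L}$ the left shift. For such $x$: $x_{[k,\infty)}=(\alpha_i,u_i)_{i\ge k}$; $\pi_{\mathfrak L}(x)=(\alpha_i)_{i\in\mathbb N}$, $\pi_{\mathfrak L}(x)_{[1,k]}=(\alpha_1,\dots,\alpha_k)$; $v^l_n(x)$ denotes the $l$-th coordinate $u_n^l$ of $u_n$. $X_\Lambda=\pi_{\mathfrak L}(X_{\mathfrak L})$, $B_k(X_\Lambda)$ its words of length $k$. Setting: $\mathfrak L_1,\mathfrak L_2$ are left-resolving $\lambda$-graph systems; write $\pi_i=\pi_{\mathfrak L_i}$, $\Lambda_i$ for the presented subshifts. $\psi_0:X_{\mathfrak L_1}\to X_{\mathfrak L_2}$ is a continuous surjective local homeomorphism with $\sigma_{\mathfrak L_2}\circ\psi_0=\psi_0\circ\sigma_{\mathfrak L_1}$, and $1\le l\le L$ are integers such that (a) $\psi_0(x)=\psi_0(x')$ implies $x_{[l,\infty)}=x'_{[l,\infty)}$; (b) there is a map $\Psi:B_L(X_{\Lambda_1})\to B_l(X_{\Lambda_2})$ with $\pi_2(\psi_0(x))_{[1,l]}=\Psi(\pi_1(x)_{[1,L]})$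 for all $x\in X_{\mathfrak L_1}$. For $v\in V_L$ (vertices of $\mathfrak L_1$), $B_L(\Lambda_1,v)$ is the set of $\mu\in B_L(X_{\Lambda_1})$ with $\mu=\pi_1(x)_{[1,L]}$ for some $x\in X_{\mathfrak L_1}$ with $v^L_L(x)=v$. For $\mu,\mu'\in B_L(\Lambda_1,v)$, $\mu\sim_v\mu'$ means: there exist $x,x'\in X_{\mathfrak L_1}$ with $\pi_1(x)_{[1,L]}=\mu$, $\pi_1(x')_{[1,L]}=\mu'$, $v^L_L(x)=v^L_L(x')=v$ and $\psi_0(x)=\psi_0(x')$; this is an equivalence relation on the finite set $B_L(\Lambda_1,v)$. For every $v\in V_L$ and every $\sim_v$-class $C\subset B_L(\Lambda_1,v)$, fix a partition $\mathbb Z_+=\bigsqcup_{\nu\in C}\mathbb Z_+(\nu,v)$ into infinite subsets and bijections $g_{(\nu,v)}:\mathbb Z_+\to\mathbb Z_+(\nu,v)$, $\nu\in C$. *)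

theory Defs
  imports "HOL-Analysis.Analysis"
begin

text \<open>A lambda-graph system. lV l = V_l, lE l = E_{l,l+1}; src, trm, lab, iota
  are the source, terminal, labeling and iota maps; alph is the finite alphabet.\<close>
record ('v, 'e, 'a) lgs =
  lV :: "nat \<Rightarrow> 'v set"
  lE :: "nat \<Rightarrow> 'e set"
  src :: "'e \<Rightarrow> 'v"
  trm :: "'e \<Rightarrow> 'v"
  lab :: "'e \<Rightarrow> 'a"
  iota :: "'v \<Rightarrow> 'v"
  alph :: "'a set"

definition lambda_graph_system :: "('v, 'e, 'a) lgs \<Rightarrow> bool" where
  "lambda_graph_system G \<longleftrightarrow>
     finite (alph G) \<and>
     (\<forall>l. finite (lV G l) \<and> lV G l \<noteq> {} \<and> finite (lE G l)) \<and>
     (\<forall>l m. l \<noteq> m \<longrightarrow> lV G l \<inter> lV G m = {} \<and> lE G l \<inter> lE G m = {}) \<and>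
     (\<forall>l. \<forall>e\<in>lE G l. src G e \<in> lV G l \<and> trm G e \<in> lV G (Suc l) \<and> lab G e \<in> alph G) \<and>
     (\<forall>l. iota G ` lV G (Suc l) = lV G l) \<and>
     (\<forall>l. \<forall>v\<in>lV G l. \<exists>e\<in>lE G l. src G e = v) \<and>
     (\<forall>l. \<forall>v\<in>lV G (Suc l). \<exists>e\<in>lE G l. trm G e = v) \<and>
     (\<forall>l\<ge>1. \<forall>u\<in>lV G (l - 1). \<forall>v\<in>lV G (Suc l).
        \<exists>f. bij_betw f {e\<in>lE G l. iota G (src G e) = u \<and> trm G e = v}
                       {e\<in>lE G (l - 1). src G e = u \<and> trm G e = iota G v}
            \<and> (\<forall>e\<in>{e\<in>lE G l. iota G (src G e) = u \<and> trm G e = v}. lab G (f e) = lab G e))"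

definition left_resolving :: "('v, 'e, 'a) lgs \<Rightarrow> bool" where
  "left_resolving G \<longleftrightarrow>
     (\<forall>e\<in>(\<Union>l. lE G l). \<forall>f\<in>(\<Union>l. lE G l).
        trm G e = trm G f \<and> lab G e = lab G f \<longrightarrow> e = f)"

definition Omega :: "('v, 'e, 'a) lgs \<Rightarrow> (nat \<Rightarrow> 'v) set" where
  "Omega G = {u. \<forall>l. u l \<in> lV G l \<and> iota G (u (Suc l)) = u l}"

definition Omega_top :: "('v, 'e, 'a) lgs \<Rightarrow> (nat \<Rightarrow> 'v) topology" where
  "Omega_top G = subtopology (product_topology (\<lambda>l. discrete_topology (lV G l)) UNIV) (Omega G)"

definition EL :: "('v, 'e, 'a) lgs \<Rightarrow> ((nat \<Rightarrow> 'v) \<times> 'a \<times> (nat \<Rightarrow> 'v)) set" where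
  "EL G = {(u, \<alpha>, w). u \<in> Omega G \<and> \<alpha> \<in> alph G \<and> w \<in> Omega G \<and>
              (\<forall>l. \<exists>e\<in>lE G l. src G e = u l \<and> trm G e = w (Suc l) \<and> lab G e = \<alpha>)}"

text \<open>Points of X_L are 0-indexed sequences: x i = (alpha_{i+1}, u_{i+1}).\<close>
definition XL :: "('v, 'e, 'a) lgs \<Rightarrow> (nat \<Rightarrow> 'a \<times> (nat \<Rightarrow> 'v)) set" where
  "XL G = {x. (\<forall>i. fst (x i) \<in> alph G \<and> snd (x i) \<in> Omega G \<and>
                  (snd (x i), fst (x (Suc i)), snd (x (Suc i))) \<in> EL G) \<and>
              (\<exists>u0. (u0, fst (x 0), snd (x 0)) \<in> EL G)}"

definition XL_top :: "('v, 'e, 'a) lgs \<Rightarrow> (nat \<Rightarrow> 'a \<times> (nat \<Rightarrow> 'v)) topology" where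
  "XL_top G = subtopology
     (product_topology (\<lambda>i. prod_topology (discrete_topology (alph G)) (Omega_top G)) UNIV) (XL G)"

definition shift :: "(nat \<Rightarrow> 'c) \<Rightarrow> nat \<Rightarrow> 'c" where
  "shift x = (\<lambda>i. x (Suc i))"

definition word :: "(nat \<Rightarrow> 'a \<times> 'w) \<Rightarrow> nat \<Rightarrow> 'a list" where
  "word x k = map (\<lambda>i. fst (x i)) [0..<k]"

text \<open>v^l_n(x) for n \<ge> 1\<close>
definition vert :: "(nat \<Rightarrow> 'a \<times> (nat \<Rightarrow> 'v)) \<Rightarrow> nat \<Rightarrow> nat \<Rightarrow> 'v" where
  "vert x l n = snd (x (n - 1)) l"

definition local_homeomorphism :: "'x topology \<Rightarrow> 'y topology \<Rightarrow> ('x \<Rightarrow> 'y) \<Rightarrow> bool" where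
  "local_homeomorphism S T f \<longleftrightarrow>
     (\<forall>x\<in>topspace S. \<exists>U. openin S U \<and> x \<in> U \<and> openin T (f ` U) \<and>
         homeomorphic_map (subtopology S U) (subtopology T (f ` U)) f)"

definition BLv :: "('v, 'e, 'a) lgs \<Rightarrow> nat \<Rightarrow> 'v \<Rightarrow> 'a list set" where
  "BLv G L v = {\<mu>. \<exists>x\<in>XL G. word x L = \<mu> \<and> vert x L L = v}"

definition simv :: "('v, 'e, 'a) lgs \<Rightarrow> ((nat \<Rightarrow> 'a \<times> (nat \<Rightarrow> 'v)) \<Rightarrow> 'y) \<Rightarrow> nat \<Rightarrow> 'v \<Rightarrow> 'a list \<Rightarrow> 'a list \<Rightarrow> bool" where
  "simv G psi L v \<mu> \<mu>' \<longleftrightarrow>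
     (\<exists>x\<in>XL G. \<exists>x'\<in>XL G. word x L = \<mu> \<and> word x' L = \<mu>' \<and>
        vert x L L = v \<and> vert x' L L = v \<and> psi x = psi x')"

end

theory Submission
  imports Defs
begin

text \<open>Left-resolvingness recovers every vertex of a point of \<open>X\<^sub>\<LL>\<close> from its successor and the
  label in between, so two points agreeing from some position on and carrying the same letters
  before it coincide. By (a), two points in a fibre of \<open>\<psi>\<^sub>0\<close> share their tail from position \<open>l\<close>,
  hence their vertex \<open>v\<^sup>L\<^sub>L\<close>, and differ only in their first \<open>L\<close> letters, which are then
  \<open>\<sim>\<^sub>v\<close>-equivalent; as the \<open>g\<^sub>(\<^sub>\<nu>\<^sub>,\<^sub>v\<^sub>)\<close> with \<open>\<nu>\<close> in one class are injective with disjoint ranges, \<open>\<xi>\<close>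
  is injective. Conversely, the local property of \<open>\<LL>\<^sub>1\<close> allows one to splice the first \<open>l - 1\<close>
  letters of any witness of \<open>\<mu> \<sim>\<^sub>v \<mu>'\<close> in front of the tail of \<open>x\<close>, and by (b) and shift-equivariance
  this does not change \<open>\<psi>\<^sub>0 x\<close>; so every word of the class occurs in the fibre of \<open>x\<close>, and since the
  ranges of the \<open>g\<^sub>(\<^sub>\<nu>\<^sub>,\<^sub>v\<^sub>)\<close> cover \<open>\<int>\<^sub>+\<close>, \<open>\<xi>\<close> is onto. Finally the word and the vertex \<open>v\<^sup>L\<^sub>L\<close> are locally
  constant, so \<open>\<xi>\<close> is continuous and open because \<open>\<psi>\<^sub>0\<close> is.\<close>

section \<open>Left-resolving \<open>\<lambda>\<close>-graph systems\<close>

lemma XL_letter: "x \<in> XL G \<Longrightarrow> fst (x i) \<in> alph G"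
  unfolding XL_def by blast

lemma XL_vertex: "x \<in> XL G \<Longrightarrow> snd (x i) \<in> Omega G"
  unfolding XL_def by blast

lemma XL_transition: "x \<in> XL G \<Longrightarrow> (snd (x i), fst (x (Suc i)), snd (x (Suc i))) \<in> EL G"
  unfolding XL_def by blast

lemma XL_initial: "x \<in> XL G \<Longrightarrow> \<exists>u0. (u0, fst (x 0), snd (x 0)) \<in> EL G"
  unfolding XL_def by blast

lemma EL_Omega: "(u, \<alpha>, w) \<in> EL G \<Longrightarrow> u \<in> Omega G \<and> \<alpha> \<in> alph G \<and> w \<in> Omega G"
  unfolding EL_def by blast

lemma EL_edge: "(u, \<alpha>, w) \<in> EL G \<Longrightarrow> \<exists>e\<in>lE G k. src G e = u k \<and> trm G e = w (Suc k) \<and> lab G e = \<alpha>"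
  unfolding EL_def by blast

lemma OmegaD: "w \<in> Omega G \<Longrightarrow> w l \<in> lV G l \<and> iota G (w (Suc l)) = w l"
  unfolding Omega_def by blast

lemma left_resolvingD:
  "\<lbrakk>left_resolving G; e \<in> lE G k; f \<in> lE G k'; trm G e = trm G f; lab G e = lab G f\<rbrakk> \<Longrightarrow> e = f"
  unfolding left_resolving_def by blast

lemma EL_source_level_unique:
  assumes "left_resolving G" "(u, \<alpha>, w) \<in> EL G" "(u', \<alpha>, w') \<in> EL G" "w (Suc k) = w' (Suc k)"
  shows "u k = u' k"
proof -
  obtain e where "e \<in> lE G k" "src G e = u k" "trm G e = w (Suc k)" "lab G e = \<alpha>"
    using EL_edge[OF assms(2)] by blast
  moreover obtain e' where "e' \<in> lE G k" "src G e' = u' k" "trm G e' = w' (Suc k)" "lab G e' = \<alpha>"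
    using EL_edge[OF assms(3)] by blast
  ultimately show ?thesis
    using left_resolvingD[OF assms(1)] assms(4) by metis
qed

lemma XL_eqI_left_resolving:
  assumes LR: "left_resolving G" and x: "x \<in> XL G" and x': "x' \<in> XL G"
    and tail: "\<forall>i\<ge>m. x i = x' i" and letters: "\<forall>i<m. fst (x i) = fst (x' i)"
  shows "x = x'"
proof
  fix i
  show "x i = x' i"
  proof (cases "i \<le> m")
    case True
    then show ?thesis
    proof (induction i rule: inc_induct)
      case (step i)
      have "(snd (x' i), fst (x (Suc i)), snd (x (Suc i))) \<in> EL G"
        using XL_transition[OF x', of i] step.IH by simp
      then have "snd (x i) = snd (x' i)"
        using EL_source_level_unique[OF LR XL_transition[OF x]] by blast
      with step.hyps letters show ?case by (simp add: prod_eq_iff)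
    qed (use tail in simp)
  qed (use tail in simp)
qed

lemma XL_vertex_eq_backward:
  assumes LR: "left_resolving G" and y: "y \<in> XL G" and y': "y' \<in> XL G"
  shows "\<lbrakk>\<forall>j. i < j \<and> j \<le> i + n \<longrightarrow> fst (y j) = fst (y' j);
          snd (y (i + n)) (k + n) = snd (y' (i + n)) (k + n)\<rbrakk> \<Longrightarrow> snd (y i) k = snd (y' i) k"
proof (induction n arbitrary: i k)
  case (Suc n)
  have "snd (y (Suc i)) (Suc k) = snd (y' (Suc i)) (Suc k)"
    using Suc.IH[of "Suc i" "Suc k"] Suc.prems by simp
  moreover have "(snd (y' i), fst (y (Suc i)), snd (y' (Suc i))) \<in> EL G"
    using XL_transition[OF y', of i] Suc.prems(1) by simp
  ultimately show ?case
    using EL_source_level_unique[OF LR XL_transition[OF y]] by blast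
qed simp

lemma lambda_graph_system_edge:
  "\<lbrakk>lambda_graph_system G; e \<in> lE G l\<rbrakk> \<Longrightarrow> src G e \<in> lV G l \<and> trm G e \<in> lV G (Suc l) \<and> lab G e \<in> alph G"
  unfolding lambda_graph_system_def by blast

lemma lambda_graph_system_iota: "lambda_graph_system G \<Longrightarrow> iota G ` lV G (Suc l) = lV G l"
  unfolding lambda_graph_system_def by blast

lemma lambda_graph_system_local:
  assumes "lambda_graph_system G" "1 \<le> l" "u \<in> lV G (l - 1)" "v \<in> lV G (Suc l)"
  shows "\<exists>f. bij_betw f {e\<in>lE G l. iota G (src G e) = u \<and> trm G e = v}
                       {e\<in>lE G (l - 1). src G e = u \<and> trm G e = iota G v}
            \<and> (\<forall>e\<in>{e\<in>lE G l. iota G (src G e) = u \<and> trm G e = v}. lab G (f e) = lab G e)"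
  using assms unfolding lambda_graph_system_def by blast

lemma lambda_graph_system_local_Suc:
  assumes "lambda_graph_system G" "u \<in> lV G k" "v \<in> lV G (Suc (Suc k))"
  shows "\<exists>f. bij_betw f {e\<in>lE G (Suc k). iota G (src G e) = u \<and> trm G e = v}
                       {e\<in>lE G k. src G e = u \<and> trm G e = iota G v}
            \<and> (\<forall>e\<in>{e\<in>lE G (Suc k). iota G (src G e) = u \<and> trm G e = v}. lab G (f e) = lab G e)"
  using lambda_graph_system_local[of G "Suc k"] assms by simp

lemma edge_into_Omega_up:
  assumes G: "lambda_graph_system G" and w: "w \<in> Omega G"
    and e: "e \<in> lE G k" "trm G e = w (Suc k)" "lab G e = \<alpha>"
  shows "\<exists>e'\<in>lE G (Suc k). trm G e' = w (Suc (Suc k)) \<and> lab G e' = \<alpha>"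
proof -
  define A where "A = {e'\<in>lE G (Suc k). iota G (src G e') = src G e \<and> trm G e' = w (Suc (Suc k))}"
  define B where "B = {e'\<in>lE G k. src G e' = src G e \<and> trm G e' = iota G (w (Suc (Suc k)))}"
  have u: "src G e \<in> lV G k" using lambda_graph_system_edge[OF G e(1)] by blast
  have v: "w (Suc (Suc k)) \<in> lV G (Suc (Suc k))" using OmegaD[OF w] by blast
  obtain f where f: "bij_betw f A B" and f_lab: "\<forall>e'\<in>A. lab G (f e') = lab G e'"
    using lambda_graph_system_local_Suc[OF G u v] unfolding A_def B_def by blast
  have "e \<in> B" unfolding B_def using e OmegaD[OF w, of "Suc k"] by simp
  then obtain e' where "e' \<in> A" "f e' = e"
    using bij_betw_imp_surj_on[OF f] by blast
  then show ?thesis using f_lab e(3) unfolding A_def by auto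
qed

lemma edge_into_Omega_down:
  assumes G: "lambda_graph_system G" and w: "w \<in> Omega G"
    and e: "e \<in> lE G (Suc k)" "trm G e = w (Suc (Suc k))" "lab G e = \<alpha>"
  shows "\<exists>e'\<in>lE G k. src G e' = iota G (src G e) \<and> trm G e' = w (Suc k) \<and> lab G e' = \<alpha>"
proof -
  define A where "A = {e'\<in>lE G (Suc k). iota G (src G e') = iota G (src G e) \<and> trm G e' = w (Suc (Suc k))}"
  define B where "B = {e'\<in>lE G k. src G e' = iota G (src G e) \<and> trm G e' = iota G (w (Suc (Suc k)))}"
  have u: "iota G (src G e) \<in> lV G k"
    using lambda_graph_system_edge[OF G e(1)] lambda_graph_system_iota[OF G, of k] by blast
  have v: "w (Suc (Suc k)) \<in> lV G (Suc (Suc k))" using OmegaD[OF w] by blast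
  obtain f where f: "bij_betw f A B" and f_lab: "\<forall>e'\<in>A. lab G (f e') = lab G e'"
    using lambda_graph_system_local_Suc[OF G u v] unfolding A_def B_def by blast
  have "e \<in> A" unfolding A_def using e by simp
  then have "f e \<in> B" using bij_betwE[OF f] by blast
  then show ?thesis
    using f_lab \<open>e \<in> A\<close> e(3) OmegaD[OF w, of "Suc k"] unfolding B_def by (intro bexI[of _ "f e"]) auto
qed

lemma edge_into_Omega_every_level:
  assumes G: "lambda_graph_system G" and w: "w \<in> Omega G"
    and e: "e \<in> lE G K" "trm G e = w (Suc K)" "lab G e = \<alpha>"
  shows "\<exists>e'\<in>lE G k. trm G e' = w (Suc k) \<and> lab G e' = \<alpha>"
proof (cases "K \<le> k")
  case True
  then show ?thesis
    by (induction k rule: dec_induct) (use e edge_into_Omega_up[OF G w] in blast)+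
next
  case False
  then have "k \<le> K" by simp
  then show ?thesis
    by (induction k rule: inc_induct) (use e edge_into_Omega_down[OF G w] in blast)+
qed

text \<open>A vertex sequence receiving an \<open>\<alpha>\<close>-labelled edge at one level has an \<open>\<alpha>\<close>-predecessor
  in \<open>Omega\<close>: left-resolvingness makes these edges unique, and the local property makes their
  sources compatible with \<open>iota\<close>.\<close>
lemma EL_predecessor_exists:
  assumes G: "lambda_graph_system G" and LR: "left_resolving G" and w: "w \<in> Omega G"
    and \<alpha>: "\<alpha> \<in> alph G" and e: "e \<in> lE G K" "trm G e = w (Suc K)" "lab G e = \<alpha>"
  shows "\<exists>u. (u, \<alpha>, w) \<in> EL G"
proof -
  define E where "E k = (SOME e'. e' \<in> lE G k \<and> trm G e' = w (Suc k) \<and> lab G e' = \<alpha>)" for k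
  have E: "E k \<in> lE G k \<and> trm G (E k) = w (Suc k) \<and> lab G (E k) = \<alpha>" for k
    unfolding E_def by (rule someI_ex) (use edge_into_Omega_every_level[OF G w e] in blast)
  define u where "u k = src G (E k)" for k
  have "iota G (u (Suc k)) = u k" for k
  proof -
    obtain e' where e': "e' \<in> lE G k" "src G e' = iota G (u (Suc k))" "trm G e' = w (Suc k)" "lab G e' = \<alpha>"
      using edge_into_Omega_down[OF G w, of "E (Suc k)" k \<alpha>] E[of "Suc k"] unfolding u_def by blast
    then have "e' = E k" using left_resolvingD[OF LR e'(1), of "E k" k] E[of k] by simp
    then show ?thesis using e'(2) unfolding u_def by simp
  qed
  moreover have "u k \<in> lV G k" for k
    unfolding u_def using lambda_graph_system_edge[OF G] E by blast
  ultimately have "u \<in> Omega G" unfolding Omega_def by blast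
  moreover have "\<forall>k. \<exists>e\<in>lE G k. src G e = u k \<and> trm G e = w (Suc k) \<and> lab G e = \<alpha>"
    unfolding u_def using E by blast
  ultimately have "(u, \<alpha>, w) \<in> EL G"
    unfolding EL_def using w \<alpha> by simp
  then show ?thesis by blast
qed

lemma EL_predecessor_along:
  assumes G: "lambda_graph_system G" and LR: "left_resolving G"
    and uw: "(u, \<alpha>, w) \<in> EL G" and w': "w' \<in> Omega G" and eq: "w' (Suc k) = w (Suc k)"
  shows "\<exists>u'. (u', \<alpha>, w') \<in> EL G \<and> u' k = u k"
proof -
  obtain e where "e \<in> lE G k" "trm G e = w' (Suc k)" "lab G e = \<alpha>"
    using EL_edge[OF uw, of k] eq by auto
  then obtain u' where u': "(u', \<alpha>, w') \<in> EL G"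
    using EL_predecessor_exists[OF G LR w'] EL_Omega[OF uw] by blast
  moreover have "u' k = u k" using EL_source_level_unique[OF LR u' uw eq] .
  ultimately show ?thesis by blast
qed

lemma XL_backward_path:
  assumes G: "lambda_graph_system G" and LR: "left_resolving G" and y: "y \<in> XL G"
  shows "\<lbrakk>w \<in> Omega G; w (Suc m) = snd (y m) (Suc m)\<rbrakk> \<Longrightarrow>
    \<exists>V. V m = w \<and> (\<forall>i<m. (V i, fst (y (Suc i)), V (Suc i)) \<in> EL G) \<and>
        (\<exists>u0. (u0, fst (y 0), V 0) \<in> EL G)"
proof (induction m arbitrary: w)
  case 0
  then have w: "w \<in> Omega G" "w (Suc 0) = snd (y 0) (Suc 0)" by simp_all
  obtain u0 where u0: "(u0, fst (y 0), snd (y 0)) \<in> EL G" using XL_initial[OF y] by blast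
  obtain u' where "(u', fst (y 0), w) \<in> EL G" using EL_predecessor_along[OF G LR u0 w] by blast
  then show ?case by (intro exI[of _ "\<lambda>_. w"]) auto
next
  case (Suc m)
  obtain u where u: "(u, fst (y (Suc m)), w) \<in> EL G" "u (Suc m) = snd (y m) (Suc m)"
    using EL_predecessor_along[OF G LR XL_transition[OF y] Suc.prems] by blast
  obtain V where V: "V m = u" "\<forall>i<m. (V i, fst (y (Suc i)), V (Suc i)) \<in> EL G"
    "\<exists>u0. (u0, fst (y 0), V 0) \<in> EL G"
    using Suc.IH[OF conjunct1[OF EL_Omega[OF u(1)]] u(2)] by blast
  have "\<forall>i<Suc m. ((V(Suc m := w)) i, fst (y (Suc i)), (V(Suc m := w)) (Suc i)) \<in> EL G"
    using V(1,2) u(1) by (auto simp: less_Suc_eq)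
  then show ?case using V(3) by (intro exI[of _ "V(Suc m := w)"]) simp
qed

lemma XL_splice:
  assumes G: "lambda_graph_system G" and LR: "left_resolving G"
    and x: "x \<in> XL G" and y: "y \<in> XL G"
    and letter: "fst (x m) = fst (y m)" and vertex: "snd (x m) (Suc m) = snd (y m) (Suc m)"
  shows "\<exists>z\<in>XL G. (\<forall>i\<ge>m. z i = x i) \<and> (\<forall>i<m. fst (z i) = fst (y i))"
proof -
  obtain V where V: "V m = snd (x m)" "\<forall>i<m. (V i, fst (y (Suc i)), V (Suc i)) \<in> EL G"
    and V0: "\<exists>u0. (u0, fst (y 0), V 0) \<in> EL G"
    using XL_backward_path[OF G LR y XL_vertex[OF x] vertex] by blast
  define z where "z i = (if m \<le> i then x i else (fst (y i), V i))" for i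
  have "(snd (z i), fst (z (Suc i)), snd (z (Suc i))) \<in> EL G" for i
  proof (cases "m \<le> i")
    case True
    then show ?thesis unfolding z_def using XL_transition[OF x, of i] by simp
  next
    case False
    then show ?thesis unfolding z_def using V letter by (cases "Suc i = m") auto
  qed
  moreover have "fst (z i) \<in> alph G" for i
    unfolding z_def using XL_letter[OF x] XL_letter[OF y] by simp
  moreover have "snd (z i) \<in> Omega G" for i
    unfolding z_def using XL_vertex[OF x] V(2)[rule_format, of i] by (cases "m \<le> i") (auto dest: EL_Omega)
  moreover have "\<exists>u0. (u0, fst (z 0), snd (z 0)) \<in> EL G"
    unfolding z_def using XL_initial[OF x] V0 by simp
  ultimately have "z \<in> XL G" unfolding XL_def by blast
  then show ?thesis by (intro bexI[of _ z]) (simp_all add: z_def)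
qed

section \<open>Locally constant maps and products with a discrete space\<close>

lemma topspace_Omega_top: "topspace (Omega_top G) = Omega G"
  unfolding Omega_top_def Omega_def by (auto simp: PiE_UNIV_domain)

lemma topspace_XL_top: "topspace (XL_top G) = XL G"
proof -
  have "x i \<in> alph G \<times> Omega G" if "x \<in> XL G" for x i
    using XL_letter[OF that] XL_vertex[OF that] by (simp add: mem_Times_iff)
  then have "XL G \<subseteq> (\<Pi>\<^sub>E i\<in>UNIV. alph G \<times> Omega G)"
    by (auto simp: PiE_UNIV_domain)
  then show ?thesis unfolding XL_top_def by (simp add: topspace_Omega_top Int_absorb1)
qed

lemma continuous_map_discrete_UNIV_compose:
  "continuous_map X (discrete_topology UNIV) f \<Longrightarrow> continuous_map X (discrete_topology UNIV) (\<lambda>x. h (f x))"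
  using continuous_map_compose[of X _ f "discrete_topology UNIV" h] by (simp add: o_def)

lemma continuous_map_discrete_UNIV_pair:
  fixes f :: "'a \<Rightarrow> 'b" and g :: "'a \<Rightarrow> 'c"
  assumes "continuous_map X (discrete_topology UNIV) f" "continuous_map X (discrete_topology UNIV) g"
  shows "continuous_map X (discrete_topology UNIV) (\<lambda>x. (f x, g x))"
proof -
  have "continuous_map X (prod_topology (discrete_topology UNIV) (discrete_topology UNIV)) (\<lambda>x. (f x, g x))"
    using assms by (simp add: continuous_map_pairwise o_def)
  then show ?thesis by (simp flip: prod_topology_discrete_topology)
qed

lemma continuous_map_discrete_UNIV_of_discrete:
  "continuous_map X (discrete_topology S) f \<Longrightarrow> continuous_map X (discrete_topology UNIV) f"
  by (metis continuous_map_in_subtopology inf_top_left subtopology_discrete_topology)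

lemma continuous_map_XL_coordinate:
  "continuous_map (XL_top G) (prod_topology (discrete_topology (alph G)) (Omega_top G)) (\<lambda>x. x i)"
  unfolding XL_top_def
  by (rule continuous_map_from_subtopology) (rule continuous_map_product_projection, simp)

lemma continuous_map_XL_letter: "continuous_map (XL_top G) (discrete_topology UNIV) (\<lambda>x. fst (x i))"
  using continuous_map_compose[OF continuous_map_XL_coordinate continuous_map_fst]
  by (auto simp: o_def intro: continuous_map_discrete_UNIV_of_discrete)

lemma continuous_map_XL_vertex: "continuous_map (XL_top G) (discrete_topology UNIV) (\<lambda>x. snd (x i) k)"
proof -
  have "continuous_map (Omega_top G) (discrete_topology (lV G k)) (\<lambda>u. u k)"
    unfolding Omega_top_def
    by (rule continuous_map_from_subtopology) (rule continuous_map_product_projection, simp)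
  with continuous_map_compose[OF continuous_map_XL_coordinate continuous_map_snd]
  have "continuous_map (XL_top G) (discrete_topology (lV G k)) ((\<lambda>u. u k) \<circ> (snd \<circ> (\<lambda>x. x i)))"
    by (rule continuous_map_compose)
  then show ?thesis by (simp add: o_def continuous_map_discrete_UNIV_of_discrete)
qed

lemma continuous_map_XL_word: "continuous_map (XL_top G) (discrete_topology UNIV) (\<lambda>x. word x k)"
proof (induction k)
  case 0
  then show ?case by (simp add: word_def)
next
  case (Suc k)
  have word_Suc: "(\<lambda>x. word x (Suc k)) = (\<lambda>x. word x k @ [fst (x k)])"
    by (simp add: word_def)
  show ?case
    unfolding word_Suc using continuous_map_discrete_UNIV_compose[OF continuous_map_discrete_UNIV_pair
        [OF Suc continuous_map_XL_letter[of G k]], of "\<lambda>(w, a). w @ [a]"]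
    by simp
qed

lemma local_homeomorphism_imp_open_map:
  assumes lh: "local_homeomorphism X Y f"
  shows "open_map X Y f"
  unfolding open_map_def
proof (intro allI impI)
  fix V assume V: "openin X V"
  have "\<forall>x\<in>V. \<exists>W. openin Y W \<and> f x \<in> W \<and> W \<subseteq> f ` V"
  proof
    fix x assume xV: "x \<in> V"
    then have "x \<in> topspace X" using openin_subset[OF V] by blast
    then obtain U where U: "openin X U" "x \<in> U" "openin Y (f ` U)"
      "homeomorphic_map (subtopology X U) (subtopology Y (f ` U)) f"
      using lh unfolding local_homeomorphism_def by blast
    have "openin (subtopology X U) (V \<inter> U)"
      using V by (simp add: openin_subtopology_Int2 openin_subtopology) blast
    then have "openin (subtopology Y (f ` U)) (f ` (V \<inter> U))"
      using homeomorphic_map_openness_eq[OF U(4)] by blast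
    then have "openin Y (f ` (V \<inter> U))" using openin_trans_full U(3) by blast
    then show "\<exists>W. openin Y W \<and> f x \<in> W \<and> W \<subseteq> f ` V" using xV U(2) by blast
  qed
  then show "openin Y (f ` V)" by (subst openin_subopen) blast
qed

lemma continuous_map_prod_discrete:
  assumes f: "continuous_map X Y f"
    and h: "\<And>n. continuous_map X (discrete_topology UNIV) (\<lambda>x. h x n)"
  shows "continuous_map (prod_topology X (discrete_topology UNIV)) (prod_topology Y (discrete_topology UNIV))
           (\<lambda>(x, n). (f x, h x n))"
  unfolding continuous_map_pairwise
proof
  show "continuous_map (prod_topology X (discrete_topology UNIV)) Y (fst \<circ> (\<lambda>(x, n). (f x, h x n)))"
    using continuous_map_compose[OF continuous_map_fst f] by (simp add: o_def case_prod_beta)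
  have "openin (prod_topology X (discrete_topology UNIV))
          {p \<in> topspace (prod_topology X (discrete_topology UNIV)). h (fst p) (snd p) \<in> C}" for C
  proof -
    have "{p \<in> topspace (prod_topology X (discrete_topology UNIV)). h (fst p) (snd p) \<in> C} =
          (\<Union>n. {x \<in> topspace X. h x n \<in> C} \<times> {n})"
      by auto
    moreover have "openin X {x \<in> topspace X. h x n \<in> C}" for n
      using openin_continuous_map_preimage[OF h] by simp
    ultimately show ?thesis by (auto simp: openin_prod_Times_iff)
  qed
  then show "continuous_map (prod_topology X (discrete_topology UNIV)) (discrete_topology UNIV)
              (snd \<circ> (\<lambda>(x, n). (f x, h x n)))"
    by (simp add: continuous_map_def o_def case_prod_beta)
qed

lemma open_map_prod_discrete:
  fixes f :: "'a \<Rightarrow> 'b" and h :: "'a \<Rightarrow> 'n \<Rightarrow> 'c"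
  assumes f: "open_map X Y f"
    and h: "\<And>n. continuous_map X (discrete_topology UNIV) (\<lambda>x. h x n)"
  shows "open_map (prod_topology X (discrete_topology UNIV)) (prod_topology Y (discrete_topology UNIV))
           (\<lambda>(x, n). (f x, h x n))"
  unfolding open_map_def
proof (intro allI impI)
  fix W :: "('a \<times> 'n) set" assume W: "openin (prod_topology X (discrete_topology UNIV)) W"
  define U where "U n c = {x \<in> topspace X. (x, n) \<in> W \<and> h x n = c}" for n c
  have "openin X (U n c)" for n c
  proof -
    have "continuous_map X (prod_topology X (discrete_topology UNIV)) (\<lambda>x. (x, n))"
      by (simp add: continuous_map_pairwise o_def)
    then have "openin X {x \<in> topspace X. (x, n) \<in> W}"
      using openin_continuous_map_preimage W by blast
    moreover have "openin X {x \<in> topspace X. h x n = c}"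
      using openin_continuous_map_preimage[OF h, of "{c}"] by simp
    moreover have "U n c = {x \<in> topspace X. (x, n) \<in> W} \<inter> {x \<in> topspace X. h x n = c}"
      unfolding U_def by blast
    ultimately show ?thesis by auto
  qed
  then have "openin (prod_topology Y (discrete_topology UNIV)) (\<Union>(n, c). f ` U n c \<times> {c})"
    using f by (auto simp: open_map_def openin_prod_Times_iff)
  moreover have "(\<lambda>(x, n). (f x, h x n)) ` W = (\<Union>(n, c). f ` U n c \<times> {c})"
    using openin_subset[OF W] unfolding U_def by (fastforce simp: image_iff)
  ultimately show "openin (prod_topology Y (discrete_topology UNIV)) ((\<lambda>(x, n). (f x, h x n)) ` W)"
    by simp
qed

section \<open>The map \<open>\<xi>\<close>\<close>

lemma word_nth: "i < k \<Longrightarrow> word x k ! i = fst (x i)"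
  by (simp add: word_def)

lemma word_eqI: "(\<And>i. i < k \<Longrightarrow> fst (x i) = fst (y i)) \<Longrightarrow> word x k = word y k"
  by (simp add: word_def)

lemma vert_in_lV: "x \<in> XL G \<Longrightarrow> vert x L L \<in> lV G L"
  unfolding vert_def using XL_vertex OmegaD by blast

lemma vert_eq_if_tail_eq: "\<lbrakk>l \<le> L; \<forall>i\<ge>l - 1. x i = x' i\<rbrakk> \<Longrightarrow> vert x L L = vert x' L L"
  unfolding vert_def by simp

lemma shift_XL: "x \<in> XL G \<Longrightarrow> shift x \<in> XL G"
  unfolding XL_def shift_def by blast

lemma funpow_shift: "(shift ^^ k) x = (\<lambda>i. x (i + k))"
  by (induction k arbitrary: x) (auto simp: shift_def)

lemma shift_equivariant_tail_eq:
  assumes comm: "\<forall>x\<in>XL G. psi (shift x) = shift (psi x)"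
    and x: "x \<in> XL G" and z: "z \<in> XL G" and tail: "\<forall>i\<ge>m. z i = x i"
  shows "\<forall>i\<ge>m. psi z i = psi x i"
proof -
  have "psi ((shift ^^ k) y) = (shift ^^ k) (psi y)" if "y \<in> XL G" for y k
    using that
  proof (induction k arbitrary: y)
    case (Suc k)
    then show ?case using Suc.IH[OF shift_XL[OF Suc.prems]] comm by (simp add: funpow_swap1)
  qed simp
  moreover have "(shift ^^ m) z = (shift ^^ m) x"
    using tail by (simp add: funpow_shift)
  ultimately have "(shift ^^ m) (psi z) = (shift ^^ m) (psi x)"
    using x z by metis
  then have "psi z (j + m) = psi x (j + m)" for j
    by (simp add: funpow_shift fun_eq_iff)
  then show ?thesis by (metis le_add_diff_inverse2)
qed

lemma cover_map_inj_on:
  assumes LR1: "left_resolving L1" and lL: "l \<le> L"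
    and a: "\<forall>x\<in>XL L1. \<forall>x'\<in>XL L1. psi0 x = psi0 x' \<longrightarrow> (\<forall>i\<ge>l - 1. x i = x' i)"
    and g_inj: "\<forall>v\<in>lV L1 L. \<forall>\<nu>\<in>BLv L1 L v. inj (g \<nu> v)"
    and g_disj: "\<forall>v\<in>lV L1 L. \<forall>\<nu>\<in>BLv L1 L v. \<forall>\<nu>'\<in>BLv L1 L v.
                   simv L1 psi0 L v \<nu> \<nu>' \<and> \<nu> \<noteq> \<nu>' \<longrightarrow> range (g \<nu> v) \<inter> range (g \<nu>' v) = {}"
  shows "inj_on (\<lambda>(x, n). (psi0 x, g (word x L) (vert x L L) n)) (XL L1 \<times> UNIV)"
proof (rule inj_onI, clarsimp)
  fix x x' n n'
  assume x: "x \<in> XL L1" and x': "x' \<in> XL L1" and psi_eq: "psi0 x = psi0 x'"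
    and g_eq: "g (word x L) (vert x L L) n = g (word x' L) (vert x' L L) n'"
  have tail: "\<forall>i\<ge>l - 1. x i = x' i" using a x x' psi_eq by blast
  define v where "v = vert x L L"
  have v': "vert x' L L = v" using vert_eq_if_tail_eq[OF lL tail] v_def by simp
  have v_lV: "v \<in> lV L1 L" using vert_in_lV[OF x] v_def by simp
  have B: "word x L \<in> BLv L1 L v" "word x' L \<in> BLv L1 L v"
    unfolding BLv_def using x x' v_def v' by auto
  have "simv L1 psi0 L v (word x L) (word x' L)"
    unfolding simv_def using x x' v_def v' psi_eq by blast
  then have word_eq: "word x L = word x' L"
    using g_disj v_lV B g_eq v_def v' by (metis disjoint_iff rangeI)
  then have "n = n'" using g_inj v_lV B g_eq v_def v' by (metis injD)
  moreover have "x = x'"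
    using XL_eqI_left_resolving[OF LR1 x x' tail] word_nth[of _ L] word_eq lL
    by (metis less_le_trans diff_le_self)
  ultimately show "x = x' \<and> n = n'" by simp
qed

text \<open>The spliced point has the tail of \<open>x\<close> and the first \<open>L\<close> letters of a witness \<open>x1'\<close>, whose
  partner \<open>x1\<close> has the first \<open>L\<close> letters of \<open>x\<close> and the same image as \<open>x1'\<close>; so by (b) the images
  of the spliced point and of \<open>x\<close> have the same first \<open>l\<close> letters.\<close>
lemma simv_word_in_fibre:
  assumes G1: "lambda_graph_system L1" and LR1: "left_resolving L1" and LR2: "left_resolving L2"
    and psi_XL: "psi0 ` XL L1 \<subseteq> XL L2"
    and comm: "\<forall>x\<in>XL L1. psi0 (shift x) = shift (psi0 x)"
    and lL: "1 \<le> l" "l \<le> L"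
    and a: "\<forall>x\<in>XL L1. \<forall>x'\<in>XL L1. psi0 x = psi0 x' \<longrightarrow> (\<forall>i\<ge>l - 1. x i = x' i)"
    and Psi: "\<forall>x\<in>XL L1. word (psi0 x) l = Psi (word x L)"
    and x: "x \<in> XL L1" and sim: "simv L1 psi0 L (vert x L L) (word x L) \<nu>'"
  shows "\<exists>z\<in>XL L1. word z L = \<nu>' \<and> vert z L L = vert x L L \<and> psi0 z = psi0 x"
proof -
  obtain x1 x1' where x1: "x1 \<in> XL L1" "word x1 L = word x L" and x1': "x1' \<in> XL L1" "word x1' L = \<nu>'"
    and v1': "vert x1' L L = vert x L L" and psi1: "psi0 x1 = psi0 x1'"
    using sim unfolding simv_def by blast
  have letters: "fst (x j) = fst (x1' j)" if "l - 1 \<le> j" "j < L" for j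
    using a x1 x1' psi1 that word_nth[of j L x] word_nth[of j L x1] by metis
  have "snd (x (l - 1)) l = snd (x1' (l - 1)) l"
  proof (rule XL_vertex_eq_backward[OF LR1 x x1'(1), of "l - 1" "L - l" l])
    show "\<forall>j. l - 1 < j \<and> j \<le> l - 1 + (L - l) \<longrightarrow> fst (x j) = fst (x1' j)"
      using letters lL by auto
    show "snd (x (l - 1 + (L - l))) (l + (L - l)) = snd (x1' (l - 1 + (L - l))) (l + (L - l))"
      using v1' lL unfolding vert_def by simp
  qed
  then obtain z where z: "z \<in> XL L1" and z_tail: "\<forall>i\<ge>l - 1. z i = x i"
    and z_head: "\<forall>i<l - 1. fst (z i) = fst (x1' i)"
    using XL_splice[OF G1 LR1 x x1'(1), of "l - 1"] letters lL by auto
  have z_word: "word z L = \<nu>'"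
    using word_eqI[of L z x1'] x1'(2) z_head z_tail letters by (metis not_le)
  have "word (psi0 z) l = word (psi0 x) l"
    using Psi z x x1 x1' z_word psi1 by metis
  then have "\<forall>i<l - 1. fst (psi0 z i) = fst (psi0 x i)"
    using word_nth[of _ l "psi0 z"] word_nth[of _ l "psi0 x"] by (metis diff_le_self less_le_trans)
  then have "psi0 z = psi0 x"
    using XL_eqI_left_resolving[OF LR2] shift_equivariant_tail_eq[OF comm x z z_tail] psi_XL x z
    by blast
  then show ?thesis using z z_word vert_eq_if_tail_eq[OF lL(2) z_tail] by blast
qed

lemma cover_map_image:
  assumes G1: "lambda_graph_system L1" and LR1: "left_resolving L1" and LR2: "left_resolving L2"
    and surj: "psi0 ` XL L1 = XL L2"
    and comm: "\<forall>x\<in>XL L1. psi0 (shift x) = shift (psi0 x)"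
    and lL: "1 \<le> l" "l \<le> L"
    and a: "\<forall>x\<in>XL L1. \<forall>x'\<in>XL L1. psi0 x = psi0 x' \<longrightarrow> (\<forall>i\<ge>l - 1. x i = x' i)"
    and Psi: "\<forall>x\<in>XL L1. word (psi0 x) l = Psi (word x L)"
    and g_cover: "\<forall>v\<in>lV L1 L. \<forall>\<nu>\<in>BLv L1 L v.
                   (\<Union>\<nu>'\<in>{\<nu>'\<in>BLv L1 L v. simv L1 psi0 L v \<nu> \<nu>'}. range (g \<nu>' v)) = UNIV"
  shows "(\<lambda>(x, n). (psi0 x, g (word x L) (vert x L L) n)) ` (XL L1 \<times> UNIV) = XL L2 \<times> UNIV"
proof
  show "(\<lambda>(x, n). (psi0 x, g (word x L) (vert x L L) n)) ` (XL L1 \<times> UNIV) \<subseteq> XL L2 \<times> UNIV"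
    using surj by auto
  show "XL L2 \<times> UNIV \<subseteq> (\<lambda>(x, n). (psi0 x, g (word x L) (vert x L L) n)) ` (XL L1 \<times> UNIV)"
  proof clarify
    fix y m assume "y \<in> XL L2"
    then obtain x where x: "x \<in> XL L1" and y: "y = psi0 x" using surj by blast
    have "word x L \<in> BLv L1 L (vert x L L)" unfolding BLv_def using x by auto
    then obtain \<nu>' n where sim: "simv L1 psi0 L (vert x L L) (word x L) \<nu>'"
      and m: "m = g \<nu>' (vert x L L) n"
      using g_cover vert_in_lV[OF x] by blast
    obtain z where "z \<in> XL L1" "word z L = \<nu>'" "vert z L L = vert x L L" "psi0 z = psi0 x"
      using simv_word_in_fibre[OF G1 LR1 LR2 _ comm lL a Psi x sim] surj by blast
    then show "(y, m) \<in> (\<lambda>(x, n). (psi0 x, g (word x L) (vert x L L) n)) ` (XL L1 \<times> UNIV)"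
      using y m by (intro image_eqI[of _ _ "(z, n)"]) auto
  qed
qed

theorem lemma7p6:
  fixes L1 :: "('v1, 'e1, 'a) lgs" and L2 :: "('v2, 'e2, 'b) lgs"
    and psi0 :: "(nat \<Rightarrow> 'a \<times> (nat \<Rightarrow> 'v1)) \<Rightarrow> (nat \<Rightarrow> 'b \<times> (nat \<Rightarrow> 'v2))"
    and l L :: nat
    and g :: "'a list \<Rightarrow> 'v1 \<Rightarrow> nat \<Rightarrow> nat"
  assumes G1: "lambda_graph_system L1" and LR1: "left_resolving L1"
    and G2: "lambda_graph_system L2" and LR2: "left_resolving L2"
    and cont: "continuous_map (XL_top L1) (XL_top L2) psi0"
    and surj: "psi0 ` XL L1 = XL L2"
    and loch: "local_homeomorphism (XL_top L1) (XL_top L2) psi0"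
    and comm: "\<forall>x\<in>XL L1. psi0 (shift x) = shift (psi0 x)"
    and lL: "1 \<le> l" "l \<le> L"
    and a: "\<forall>x\<in>XL L1. \<forall>x'\<in>XL L1. psi0 x = psi0 x' \<longrightarrow> (\<forall>i\<ge>l - 1. x i = x' i)"
    and b: "\<exists>Psi :: 'a list \<Rightarrow> 'b list. \<forall>x\<in>XL L1. word (psi0 x) l = Psi (word x L)"
    and g_inj: "\<forall>v\<in>lV L1 L. \<forall>\<nu>\<in>BLv L1 L v. inj (g \<nu> v)"
    and g_disj: "\<forall>v\<in>lV L1 L. \<forall>\<nu>\<in>BLv L1 L v. \<forall>\<nu>'\<in>BLv L1 L v.
                   simv L1 psi0 L v \<nu> \<nu>' \<and> \<nu> \<noteq> \<nu>' \<longrightarrow> range (g \<nu> v) \<inter> range (g \<nu>' v) = {}"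
    and g_cover: "\<forall>v\<in>lV L1 L. \<forall>\<nu>\<in>BLv L1 L v.
                   (\<Union>\<nu>'\<in>{\<nu>'\<in>BLv L1 L v. simv L1 psi0 L v \<nu> \<nu>'}. range (g \<nu>' v)) = UNIV"
  shows "homeomorphic_map
           (prod_topology (XL_top L1) (discrete_topology (UNIV :: nat set)))
           (prod_topology (XL_top L2) (discrete_topology (UNIV :: nat set)))
           (\<lambda>(x, n). (psi0 x, g (word x L) (vert x L L) n))"
proof -
  let ?\<xi> = "\<lambda>(x, n). (psi0 x, g (word x L) (vert x L L) n)"
  let ?D = "discrete_topology (UNIV :: nat set)"
  obtain Psi where Psi: "\<forall>x\<in>XL L1. word (psi0 x) l = Psi (word x L)" using b by blast
  have "continuous_map (XL_top L1) (discrete_topology UNIV) (\<lambda>x. (word x L, vert x L L))"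
    unfolding vert_def
    by (intro continuous_map_discrete_UNIV_pair continuous_map_XL_word continuous_map_XL_vertex)
  from continuous_map_discrete_UNIV_compose[OF this, where h = "\<lambda>(w, v). g w v n" for n]
  have g_cont: "continuous_map (XL_top L1) (discrete_topology UNIV) (\<lambda>x. g (word x L) (vert x L L) n)"
    for n by simp
  have "continuous_map (prod_topology (XL_top L1) ?D) (prod_topology (XL_top L2) ?D) ?\<xi>"
    using continuous_map_prod_discrete[OF cont g_cont] .
  moreover have "open_map (prod_topology (XL_top L1) ?D) (prod_topology (XL_top L2) ?D) ?\<xi>"
    using open_map_prod_discrete[OF local_homeomorphism_imp_open_map[OF loch] g_cont] .
  moreover have "inj_on ?\<xi> (XL L1 \<times> UNIV)"
    using cover_map_inj_on[OF LR1 lL(2) a g_inj g_disj] .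
  moreover have "?\<xi> ` (XL L1 \<times> UNIV) = XL L2 \<times> UNIV"
    using cover_map_image[OF G1 LR1 LR2 surj comm lL a Psi g_cover] .
  ultimately show ?thesis
    by (intro bijective_open_imp_homeomorphic_map) (simp_all add: topspace_XL_top)
qed

end
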